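(* Let $q$ be a power of $2$ and let $\alpha,\beta \in \mathbb{F}_{q^2}$ be such that the line $\{(\alpha t+\beta, t): t\}$ is not tangent to the Hermitian curve $x^q+x=y^{q+1}$. Let $\gamma = \beta + \beta^q$, $p(t) = t^{q+1} + \alpha^q t^q + \alpha t + \gamma$, let $\sigma_0,\dots,\sigma_q$ be the (distinct) roots of $p(t)$, and for $k \geq 0$ let $P_k = \sum_{i=0}^q \sigma_i^k$. Then for every integer $k \geq 0$, $P_{k+1} = \alpha^q P_k$ if and only if the remainder of $t^k$ upon division by $p(t)$ in $\mathbb{F}_{q^2}[t]$ has degree strictly less than $q$.
   Context: The roots $\sigma_i$ lie in an algebraic closure of $\mathbb{F}_{q^2}$ (in fact in $\mathbb{F}_{q^2}$, being the $t$-coordinates of the $q+1$ intersection points of the non-tangent line with the curve). *)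

theory Defs
  imports "HOL-Computational_Algebra.Polynomial" "HOL-Library.Cardinality"
begin

definition herm_curve :: "nat \<Rightarrow> 'a::field \<Rightarrow> 'a \<Rightarrow> bool" where
  "herm_curve q x y \<longleftrightarrow> x ^ q + x = y ^ (q + 1)"

text \<open>The line  {(alpha*t + beta, t)}  (direction vector (alpha, 1)) is tangent to the
  Hermitian curve  F(x,y) = x^q + x - y^(q+1) = 0  if it passes through a point of the curve
  at which the gradient of F is orthogonal to the direction of the line, i.e.
  alpha * dF/dx + 1 * dF/dy = 0 there.\<close>
definition line_tangent_herm :: "nat \<Rightarrow> 'a::field \<Rightarrow> 'a \<Rightarrow> bool" where
  "line_tangent_herm q \<alpha> \<beta> \<longleftrightarrow>
     (\<exists>t. herm_curve q (\<alpha> * t + \<beta>) t \<and>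
          \<alpha> * (of_nat q * (\<alpha> * t + \<beta>) ^ (q - 1) + 1) - of_nat (q + 1) * t ^ q = 0)"

definition herm_poly :: "nat \<Rightarrow> 'a::field \<Rightarrow> 'a \<Rightarrow> 'a poly" where
  "herm_poly q \<alpha> \<beta> =
     monom 1 (q + 1) + monom (\<alpha> ^ q) q + monom \<alpha> 1 + [:\<beta> + \<beta> ^ q:]"

definition power_sum :: "'a::field poly \<Rightarrow> nat \<Rightarrow> 'a" where
  "power_sum p k = (\<Sum>\<sigma>\<in>{\<sigma>. poly p \<sigma> = 0}. \<sigma> ^ k)"

end

theory Submission
  imports Defs "HOL-Computational_Algebra.Primes"
begin

text \<open>Since the field has characteristic 2 and \<open>(\<alpha>^q)^q = \<alpha>\<close>, the substitution
  \<open>t = u + \<alpha>^q\<close> turns \<open>p(t)\<close> into \<open>u^(q+1) + c\<close> with \<open>c = \<alpha>^(q+1) + \<beta> + \<beta>^q\<close>,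
  and if \<open>c = 0\<close> the line is tangent at \<open>t = \<alpha>^q\<close>. For \<open>c \<noteq> 0\<close> the roots of \<open>p\<close> are
  \<open>\<alpha>^q + u\<close> for the \<open>q + 1\<close> solutions of \<open>u^(q+1) = c\<close>, a coset of the group of
  \<open>(q+1)\<close>-th roots of unity, so \<open>\<Sum> u^j = 0\<close> for \<open>1 \<le> j \<le> q\<close>.
  Hence \<open>P(k+1) - \<alpha>^q P(k) = \<Sum> (u + \<alpha>^q)^k u\<close>. Replacing \<open>t^k\<close> by its remainder \<open>r\<close>
  modulo \<open>p\<close>, of degree at most \<open>q\<close>, each monomial of \<open>r\<close> of degree below \<open>q\<close> yields a
  polynomial in \<open>u\<close> of degree at most \<open>q\<close> without constant term, which sums to zero. What
  remains is \<open>c\<close> times the coefficient of \<open>t^q\<close> in \<open>r\<close>, because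
  \<open>\<Sum> (u + \<alpha>^q)^q u = \<Sum> (u^(q+1) + \<alpha> u) = (q + 1) c = c\<close>.\<close>

text \<open>The library's \<open>finite_field_power_card_eq_same\<close> is stated for the type class
  \<open>finite_field\<close>, which a type variable of sort \<open>{field,finite}\<close> is not known to inhabit.\<close>

lemma finite_field_power_CARD:
  fixes x :: "'a::{field,finite}"
  shows "x ^ CARD('a) = x"
proof (cases "x = 0")
  case False
  have "(\<Prod>y\<in>UNIV - {0}. x * y) = (\<Prod>y\<in>UNIV - {0}. y)"
    by (rule prod.reindex_bij_witness[of _ "\<lambda>y. y / x" "\<lambda>y. x * y"]) (use False in auto)
  then have "x ^ (CARD('a) - 1) * (\<Prod>y\<in>UNIV - {0}. y) = (\<Prod>y\<in>UNIV - {0::'a}. y)"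
    by (simp add: prod.distrib card_Diff_singleton)
  then have "x ^ (CARD('a) - 1) = 1"
    by simp
  moreover have "CARD('a) = Suc (CARD('a) - 1)"
    by simp
  ultimately show ?thesis
    by (metis power_Suc2 mult_1)
qed simp

lemma of_nat_CARD_eq_0: "(of_nat CARD('a) :: 'a::{ring_1,finite}) = 0"
proof -
  have "(\<Sum>x\<in>UNIV. x + 1) = (\<Sum>x\<in>UNIV. x :: 'a)"
    by (rule sum.reindex_bij_witness[of _ "\<lambda>x. x - 1" "\<lambda>x. x + 1"]) auto
  then show ?thesis
    by (simp add: sum.distrib)
qed

lemma CHAR_eq_2_if_CARD_eq_power_2:
  assumes "CARD('a::{field,finite}) = 2 ^ n"
  shows "CHAR('a) = 2"
proof -
  have "prime CHAR('a)"
    by (simp add: finite_imp_CHAR_pos prime_CHAR_semidom)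
  moreover have "CHAR('a) dvd 2 ^ n"
    using of_nat_CARD_eq_0[where 'a = 'a] of_nat_eq_0_iff_char_dvd assms by metis
  ultimately have "CHAR('a) dvd 2"
    using prime_dvd_power by blast
  with \<open>prime CHAR('a)\<close> show ?thesis
    using primes_dvd_imp_eq two_is_prime_nat by blast
qed

lemma card_power_eq_le:
  fixes y :: "'a::idom"
  assumes "n > 0"
  shows "card {u. u ^ n = y} \<le> n"
proof -
  define p where "p = [:0, 1:] ^ n + [:- y:]"
  have "degree p = n"
    using assms by (simp add: p_def degree_add_eq_left degree_linear_power)
  moreover have "p \<noteq> 0"
    using assms \<open>degree p = n\<close> by auto
  moreover have "{u. u ^ n = y} = {u. poly p u = 0}"
    by (simp add: p_def)
  ultimately show ?thesis
    using card_poly_roots_bound[of p] by simp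
qed

lemma sum_power_eq_0_if_bij_mult:
  fixes z :: "'a::idom"
  assumes "bij_betw ((*) z) U U" and "z ^ j \<noteq> 1"
  shows "(\<Sum>u\<in>U. u ^ j) = 0"
proof -
  have "(\<Sum>u\<in>U. u ^ j) = (\<Sum>u\<in>U. (z * u) ^ j)"
    using sum.reindex_bij_betw[OF assms(1), of "\<lambda>u. u ^ j"] by simp
  also have "\<dots> = z ^ j * (\<Sum>u\<in>U. u ^ j)"
    by (simp add: power_mult_distrib sum_distrib_left)
  finally have "(1 - z ^ j) * (\<Sum>u\<in>U. u ^ j) = 0"
    by (simp add: algebra_simps)
  with assms(2) show ?thesis
    by simp
qed

lemma CARD_eq_square_imp_two_le:
  assumes "CARD('a::{field,finite}) = q ^ 2"
  shows "q \<ge> 2"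
proof -
  have "card {0, 1::'a} \<le> q ^ 2"
    using card_mono[of UNIV "{0, 1::'a}"] assms by simp
  then show ?thesis
    by (cases "q \<le> 1") (auto simp: le_Suc_eq)
qed

text \<open>The norm \<open>u \<mapsto> u^(q+1)\<close> maps the \<open>q^2 - 1\<close> nonzero elements into the \<open>q - 1\<close>
  nonzero solutions of \<open>y^q = y\<close>, with fibres of size at most \<open>q + 1\<close>; so all fibres are full.\<close>

lemma card_power_Suc_eq_if_CARD_eq_square:
  fixes c :: "'a::{field,finite}"
  assumes card: "CARD('a) = q ^ 2" and "c \<noteq> 0" and "c ^ q = c"
  shows "card {u. u ^ (q + 1) = c} = q + 1"
proof (rule ccontr)
  assume fibre_c: "card {u. u ^ (q + 1) = c} \<noteq> q + 1"
  define T where "T = {y::'a. y \<noteq> 0 \<and> y ^ q = y}"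
  define F where "F y = {u::'a. u ^ (q + 1) = y}" for y
  have "q \<ge> 2"
    using card by (rule CARD_eq_square_imp_two_le)
  have F_le: "card (F y) \<le> q + 1" for y
    unfolding F_def by (rule card_power_eq_le) simp
  have "y ^ (q - 1) = 1" if "y \<in> T" for y
  proof -
    have "y ^ (q - 1) * y = 1 * y"
      using that \<open>q \<ge> 2\<close> by (simp add: T_def flip: power_Suc2)
    then show ?thesis
      using that by (simp add: T_def)
  qed
  then have T_le: "card T \<le> q - 1"
    using card_mono[of "{y. y ^ (q - 1) = 1}" T] card_power_eq_le[of "q - 1" "1::'a"] \<open>q \<ge> 2\<close>
    by force
  have norm_in_T: "u ^ (q + 1) \<in> T" if "u \<noteq> 0" for u :: 'a
  proof -
    have "(u ^ (q + 1)) ^ q = u ^ CARD('a) * u ^ q"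
      by (simp add: card power2_eq_square algebra_simps flip: power_mult power_add)
    then show ?thesis
      using that by (simp add: T_def finite_field_power_CARD mult.commute)
  qed
  have "UNIV - {0} = (\<Union>y\<in>T. F y)"
  proof (intro equalityI subsetI)
    show "u \<in> (\<Union>y\<in>T. F y)" if "u \<in> UNIV - {0}" for u
      using that norm_in_T[of u] by (auto simp: F_def)
  qed (auto simp: F_def T_def)
  then have "q ^ 2 - 1 = card (\<Union>y\<in>T. F y)"
    using card card_Diff_singleton[of 0 "UNIV :: 'a set"] by simp
  also have "\<dots> = (\<Sum>y\<in>T. card (F y))"
    by (rule card_UN_disjoint) (auto simp: F_def)
  also have "\<dots> < (\<Sum>y\<in>T. q + 1)"
  proof (rule sum_strict_mono_ex1)
    show "\<exists>y\<in>T. card (F y) < q + 1"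
      using F_le[of c] fibre_c assms by (auto simp: T_def F_def)
    show "\<forall>y\<in>T. card (F y) \<le> q + 1"
      using F_le by blast
  qed simp
  also have "\<dots> = card T * (q + 1)"
    by simp
  also have "\<dots> \<le> (q - 1) * (q + 1)"
    using T_le by (rule mult_le_mono1)
  also have "\<dots> = q ^ 2 - 1"
    by (simp add: power2_eq_square algebra_simps)
  finally show False
    by simp
qed

lemma sum_power_norm_fibre_eq_0:
  fixes c :: "'a::{field,finite}"
  assumes "CARD('a) = q ^ 2" and "c \<noteq> 0" and "c ^ q = c" and "1 \<le> j" and "j \<le> q"
  shows "(\<Sum>u | u ^ (q + 1) = c. u ^ j) = 0"
proof -
  have "\<not> {z::'a. z ^ (q + 1) = 1} \<subseteq> {z. z ^ j = 1}"
  proof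
    assume "{z::'a. z ^ (q + 1) = 1} \<subseteq> {z. z ^ j = 1}"
    then have "card {z::'a. z ^ (q + 1) = 1} \<le> card {z::'a. z ^ j = 1}"
      by (intro card_mono) simp_all
    also have "\<dots> \<le> j"
      using \<open>1 \<le> j\<close> by (intro card_power_eq_le) simp
    finally show False
      using card_power_Suc_eq_if_CARD_eq_square[OF assms(1), of 1] \<open>j \<le> q\<close> by simp
  qed
  then obtain z :: 'a where z: "z ^ (q + 1) = 1" "z ^ j \<noteq> 1"
    by blast
  then have "z \<noteq> 0"
    by auto
  have "bij_betw ((*) z) {u. u ^ (q + 1) = c} {u. u ^ (q + 1) = c}"
  proof (rule bij_betw_byWitness[where f' = "\<lambda>u. u / z"])
    show "(*) z ` {u. u ^ (q + 1) = c} \<subseteq> {u. u ^ (q + 1) = c}"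
      using z(1) by (auto simp: power_mult_distrib)
    show "(\<lambda>u. u / z) ` {u. u ^ (q + 1) = c} \<subseteq> {u. u ^ (q + 1) = c}"
      using z(1) by (auto simp: power_divide)
  qed (use \<open>z \<noteq> 0\<close> in simp_all)
  then show ?thesis
    using z(2) by (rule sum_power_eq_0_if_bij_mult)
qed

lemma sum_shifted_power_times_eq_0:
  fixes U :: "'a::comm_ring_1 set"
  assumes "\<And>j. 1 \<le> j \<Longrightarrow> j \<le> n \<Longrightarrow> (\<Sum>u\<in>U. u ^ j) = 0" and "i < n"
  shows "(\<Sum>u\<in>U. (u + a) ^ i * u) = 0"
proof -
  have "(\<Sum>u\<in>U. (u + a) ^ i * u) =
      (\<Sum>u\<in>U. \<Sum>k\<le>i. of_nat (i choose k) * a ^ (i - k) * u ^ Suc k)"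
    by (simp add: binomial_ring sum_distrib_left mult_ac)
  also have "\<dots> = (\<Sum>k\<le>i. of_nat (i choose k) * a ^ (i - k) * (\<Sum>u\<in>U. u ^ Suc k))"
    by (subst sum.swap) (simp add: sum_distrib_left)
  also have "\<dots> = 0"
  proof (intro sum.neutral ballI)
    fix k assume "k \<in> {..i}"
    then have "(\<Sum>u\<in>U. u ^ Suc k) = 0"
      using assms(2) by (intro assms(1)) auto
    then show "of_nat (i choose k) * a ^ (i - k) * (\<Sum>u\<in>U. u ^ Suc k) = 0"
      by simp
  qed
  finally show ?thesis .
qed

lemma degree_mod_le_if_degree_eq_Suc:
  fixes p :: "'a::field poly"
  assumes "degree p = Suc n"
  shows "degree (f mod p) \<le> n"
  using degree_mod_less[of p f] assms by (cases "p = 0") auto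

lemma sum_poly_shifted_times_eq_coeff_mod:
  fixes p f :: "'a::field poly"
  assumes deg_p: "degree p = Suc n"
    and roots: "\<And>u. u \<in> U \<Longrightarrow> poly p (u + a) = 0"
    and power_sums: "\<And>j. 1 \<le> j \<Longrightarrow> j \<le> n \<Longrightarrow> (\<Sum>u\<in>U. u ^ j) = 0"
  shows "(\<Sum>u\<in>U. poly f (u + a) * u) = coeff (f mod p) n * (\<Sum>u\<in>U. (u + a) ^ n * u)"
proof -
  define r where "r = f mod p"
  have "degree r \<le> n"
    unfolding r_def using deg_p by (rule degree_mod_le_if_degree_eq_Suc)
  have poly_r: "poly r x = (\<Sum>i\<le>n. coeff r i * x ^ i)" for x
  proof -
    have "poly r x = poly (\<Sum>i\<le>n. monom (coeff r i) i) x"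
      using poly_as_sum_of_monoms'[OF \<open>degree r \<le> n\<close>] by simp
    then show ?thesis
      by (simp add: poly_sum poly_monom)
  qed
  have "poly f (u + a) = poly r (u + a)" if "u \<in> U" for u
  proof -
    have "poly f (u + a) = poly (f div p * p + r) (u + a)"
      by (simp add: r_def)
    then show ?thesis
      using roots[OF that] by simp
  qed
  then have "(\<Sum>u\<in>U. poly f (u + a) * u) = (\<Sum>u\<in>U. \<Sum>i\<le>n. coeff r i * ((u + a) ^ i * u))"
    by (simp add: poly_r sum_distrib_right mult.assoc)
  also have "\<dots> = (\<Sum>i\<le>n. coeff r i * (\<Sum>u\<in>U. (u + a) ^ i * u))"
    by (subst sum.swap) (simp add: sum_distrib_left)
  also have "\<dots> = coeff r n * (\<Sum>u\<in>U. (u + a) ^ n * u)"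
    using sum_shifted_power_times_eq_0[OF power_sums]
    by (simp add: lessThan_Suc_atMost[symmetric])
  finally show ?thesis
    by (simp add: r_def)
qed

lemma coeff_eq_0_iff_degree_less:
  assumes "degree p \<le> n" and "n > 0"
  shows "coeff p n = 0 \<longleftrightarrow> degree p < n"
  using assms by (metis coeff_eq_0 degree_0 le_neq_implies_less leading_coeff_0_iff)

lemma poly_herm_poly:
  "poly (herm_poly q \<alpha> \<beta>) x = x ^ (q + 1) + \<alpha> ^ q * x ^ q + \<alpha> * x + (\<beta> + \<beta> ^ q)"
  by (simp add: herm_poly_def poly_monom)

lemma degree_herm_poly:
  assumes "q > 0"
  shows "degree (herm_poly q \<alpha> \<beta>) = q + 1"
proof (rule antisym)
  show "degree (herm_poly q \<alpha> \<beta>) \<le> q + 1"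
    by (rule degree_le) (use assms in \<open>auto simp: herm_poly_def coeff_monom coeff_pCons split: nat.split\<close>)
  show "q + 1 \<le> degree (herm_poly q \<alpha> \<beta>)"
    by (rule le_degree) (use assms in \<open>simp add: herm_poly_def coeff_monom\<close>)
qed

locale hermitian_line =
  fixes q m :: nat and \<alpha> \<beta> :: "'a::{field,finite}"
  assumes q_eq: "q = 2 ^ m" and CARD_eq: "CARD('a) = q ^ 2"
begin

definition root_norm :: 'a where
  "root_norm = \<alpha> ^ (q + 1) + \<beta> + \<beta> ^ q"

lemma CHAR_eq_2: "CHAR('a) = 2"
  using CHAR_eq_2_if_CARD_eq_power_2[of "m * 2"] CARD_eq q_eq by (simp add: power_mult)

lemma two_eq_0: "(2::'a) = 0"
  using of_nat_CHAR[where 'a = 'a] CHAR_eq_2 by simp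

lemma two_le_q: "q \<ge> 2"
  using CARD_eq_square_imp_two_le CARD_eq by blast

lemma of_nat_q: "(of_nat q :: 'a) = 0"
  using two_le_q q_eq by (cases m) (simp_all add: two_eq_0)

lemma power_q_add: "(x + y) ^ q = x ^ q + y ^ q" for x y :: 'a
  using CHAR_eq_2 q_eq by (intro freshmans_dream') simp_all

lemma power_q_power_q: "(x ^ q) ^ q = x" for x :: 'a
  using finite_field_power_CARD[of x] CARD_eq by (simp add: power2_eq_square power_mult)

lemma poly_herm_poly_shift:
  "poly (herm_poly q \<alpha> \<beta>) (u + \<alpha> ^ q) = u ^ (q + 1) + root_norm"
proof -
  have "(u + \<alpha> ^ q) ^ (q + 1) = (u ^ q + \<alpha>) * (u + \<alpha> ^ q)"
    by (simp add: power_q_add power_q_power_q)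
  then have "poly (herm_poly q \<alpha> \<beta>) (u + \<alpha> ^ q) =
      u ^ (q + 1) + root_norm + 2 * (\<alpha> ^ q * u ^ q + \<alpha> * u + \<alpha> * \<alpha> ^ q)"
    by (simp add: poly_herm_poly power_q_add power_q_power_q root_norm_def algebra_simps)
  then show ?thesis
    by (simp add: two_eq_0)
qed

lemma root_norm_power_q: "root_norm ^ q = root_norm"
proof -
  have "(\<alpha> ^ (q + 1)) ^ q = \<alpha> ^ (q + 1)"
    by (simp add: power_mult_distrib power_q_power_q mult.commute)
  then show ?thesis
    by (simp add: root_norm_def power_q_add power_q_power_q add_ac)
qed

lemma line_tangent_herm_if_root_norm_eq_0:
  assumes "root_norm = 0"
  shows "line_tangent_herm q \<alpha> \<beta>"
  unfolding line_tangent_herm_def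
proof (intro exI conjI)
  have "(\<alpha> * \<alpha> ^ q + \<beta>) ^ q + (\<alpha> * \<alpha> ^ q + \<beta>) = 2 * (\<alpha> * \<alpha> ^ q) + (\<beta> + \<beta> ^ q)"
    by (simp add: power_q_add power_mult_distrib power_q_power_q algebra_simps)
  also have "\<beta> + \<beta> ^ q = \<alpha> * \<alpha> ^ q"
    using assms uminus_CHAR_2[OF CHAR_eq_2] by (simp add: root_norm_def add_eq_0_iff2 add.assoc)
  finally show "herm_curve q (\<alpha> * \<alpha> ^ q + \<beta>) (\<alpha> ^ q)"
    by (simp add: herm_curve_def two_eq_0 power_q_power_q)
  show "\<alpha> * (of_nat q * (\<alpha> * \<alpha> ^ q + \<beta>) ^ (q - 1) + 1) - of_nat (q + 1) * (\<alpha> ^ q) ^ q = 0"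
    by (simp add: of_nat_q power_q_power_q)
qed

lemma roots_herm_poly:
  "{\<sigma>. poly (herm_poly q \<alpha> \<beta>) \<sigma> = 0} = (\<lambda>u. u + \<alpha> ^ q) ` {u. u ^ (q + 1) = root_norm}"
proof (intro equalityI subsetI)
  fix \<sigma> assume "\<sigma> \<in> {\<sigma>. poly (herm_poly q \<alpha> \<beta>) \<sigma> = 0}"
  then have "(\<sigma> - \<alpha> ^ q) ^ (q + 1) + root_norm = 0"
    using poly_herm_poly_shift[of "\<sigma> - \<alpha> ^ q"] by simp
  then have "(\<sigma> - \<alpha> ^ q) ^ (q + 1) = root_norm"
    using uminus_CHAR_2[OF CHAR_eq_2] by (simp add: add_eq_0_iff2)
  then show "\<sigma> \<in> (\<lambda>u. u + \<alpha> ^ q) ` {u. u ^ (q + 1) = root_norm}"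
    by (intro image_eqI[of _ _ "\<sigma> - \<alpha> ^ q"]) simp_all
qed (auto simp: poly_herm_poly_shift two_eq_0 simp flip: mult_2)

lemma power_sum_herm_poly_Suc:
  assumes "root_norm \<noteq> 0"
  shows "power_sum (herm_poly q \<alpha> \<beta>) (k + 1) =
    \<alpha> ^ q * power_sum (herm_poly q \<alpha> \<beta>) k + coeff ([:0, 1:] ^ k mod herm_poly q \<alpha> \<beta>) q * root_norm"
proof -
  define U where "U = {u::'a. u ^ (q + 1) = root_norm}"
  have power_sums: "(\<Sum>u\<in>U. u ^ j) = 0" if "1 \<le> j" "j \<le> q" for j
    unfolding U_def using CARD_eq assms root_norm_power_q that by (rule sum_power_norm_fibre_eq_0)
  have power_sum_eq: "power_sum (herm_poly q \<alpha> \<beta>) i = (\<Sum>u\<in>U. (u + \<alpha> ^ q) ^ i)" for i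
    unfolding power_sum_def roots_herm_poly U_def by (subst sum.reindex) (auto simp: inj_on_def)
  have "(\<Sum>u\<in>U. (u + \<alpha> ^ q) ^ q * u) = (\<Sum>u\<in>U. root_norm + \<alpha> * u ^ 1)"
    by (intro sum.cong) (simp_all add: U_def power_q_add power_q_power_q algebra_simps)
  also have "\<dots> = of_nat (q + 1) * root_norm"
    using power_sums[of 1] two_le_q card_power_Suc_eq_if_CARD_eq_square[OF CARD_eq assms root_norm_power_q]
    by (simp add: sum.distrib U_def flip: sum_distrib_left)
  finally have sum_norm: "(\<Sum>u\<in>U. (u + \<alpha> ^ q) ^ q * u) = root_norm"
    by (simp add: of_nat_q)
  have "power_sum (herm_poly q \<alpha> \<beta>) (k + 1) =
      \<alpha> ^ q * power_sum (herm_poly q \<alpha> \<beta>) k + (\<Sum>u\<in>U. poly ([:0, 1:] ^ k) (u + \<alpha> ^ q) * u)"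
    by (simp add: power_sum_eq sum_distrib_left algebra_simps flip: sum.distrib)
  also have "(\<Sum>u\<in>U. poly ([:0, 1:] ^ k) (u + \<alpha> ^ q) * u) =
      coeff ([:0, 1:] ^ k mod herm_poly q \<alpha> \<beta>) q * (\<Sum>u\<in>U. (u + \<alpha> ^ q) ^ q * u)"
    using two_le_q power_sums
    by (intro sum_poly_shifted_times_eq_coeff_mod) (simp_all add: degree_herm_poly poly_herm_poly_shift U_def two_eq_0)
  finally show ?thesis
    by (simp add: sum_norm)
qed

end

theorem mainTheorem4:
  fixes q m :: nat and \<alpha> \<beta> :: "'a::{field,finite}"
  assumes "q = 2 ^ m"
    and "CARD('a) = q ^ 2"
    and "\<not> line_tangent_herm q \<alpha> \<beta>"
  shows "\<forall>k::nat. power_sum (herm_poly q \<alpha> \<beta>) (k + 1) = \<alpha> ^ q * power_sum (herm_poly q \<alpha> \<beta>) k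
           \<longleftrightarrow> degree ([:0, 1:] ^ k mod herm_poly q \<alpha> \<beta>) < q"
proof -
  interpret hermitian_line q m \<alpha> \<beta>
    using assms(1,2) by unfold_locales
  have "root_norm \<noteq> 0"
    using assms(3) line_tangent_herm_if_root_norm_eq_0 by blast
  show ?thesis
  proof
    fix k
    have "degree ([:0, 1:] ^ k mod herm_poly q \<alpha> \<beta>) \<le> q"
      using two_le_q by (intro degree_mod_le_if_degree_eq_Suc) (simp add: degree_herm_poly)
    then have "coeff ([:0, 1:] ^ k mod herm_poly q \<alpha> \<beta>) q = 0
        \<longleftrightarrow> degree ([:0, 1:] ^ k mod herm_poly q \<alpha> \<beta>) < q"
      by (rule coeff_eq_0_iff_degree_less) (use two_le_q in simp)
    then show "power_sum (herm_poly q \<alpha> \<beta>) (k + 1) = \<alpha> ^ q * power_sum (herm_poly q \<alpha> \<beta>) k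
        \<longleftrightarrow> degree ([:0, 1:] ^ k mod herm_poly q \<alpha> \<beta>) < q"
      using power_sum_herm_poly_Suc[OF \<open>root_norm \<noteq> 0\<close>, of k] \<open>root_norm \<noteq> 0\<close> by simp
  qed
qed

end
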